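(* Let $n\ge 1$ and let $\vec s=(s_1,\dots,s_n)$, $\vec t=(t_1,\dots,t_n)$ be positive integers with $t_i<s_i$ for all $i$. Let $\mathcal{B}_{\vec s,\vec t}(n)$ be the number of distinct sets of balls that can be on the lawn after $n$ turns of the $(\vec s,\vec t)$-tennis ball process. Then $\mathcal{B}_{\vec s,\vec t}(n)=|\mathrm{SVT}((n+1)^2,\rho)|$, where $\rho$ is the density on the shape $(n+1,n+1)$ with first row densities $(\rho_{1,1},\rho_{1,2},\dots,\rho_{1,n+1})=(1,t_1,t_2,\dots,t_n)$ and second row densities $(\rho_{2,1},\dots,\rho_{2,n},\rho_{2,n+1})=(s_1-t_1,s_2-t_2,\dots,s_n-t_n,1)$.
   Context: The $(\vec s,\vec t)$-tennis ball process: balls are numbered $1,2,\dots,s_1+\dots+s_n$. There is a pool, initially empty. At turn $i$ ($1\le i\le n$), the balls numbered $s_1+\dots+s_{i-1}+1,\dots,s_1+\dots+s_i$ are added to the pool, and then any $t_i$ balls of the pool are removed and thrown onto the lawn. $\mathcal{B}_{\vec s,\vec t}(n)$ counts the possible sets of balls on the lawn after $n$ turns. A density on a shape $\lambda$ is an assignment of a nonnegative integer $\rho_{i,j}$ to every cell $(i,j)$ (row $i$, column $j$); let $N=\sum\rho_{i,j}$. A standard set-valued Young tableau of shape $\lambda$ and density $\rho$ assigns to each cell $(i,j)$ a set $S_{i,j}$ with $|S_{i,j}|=\rho_{i,j}$, the sets partitioning $[N]$, such that every element of $S_{i,j}$ is smaller than every element of $S_{i,j+1}$ and of $S_{i+1,j}$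 whenever those cells exist. $\mathrm{SVT}(\lambda,\rho)$ is the set of these tableaux. *)

theory Defs
  imports Main
begin

definition balls_upto :: "(nat \<Rightarrow> nat) \<Rightarrow> nat \<Rightarrow> nat" where
  "balls_upto s i = (\<Sum>k = 1..i. s k)"

(* Reachable (pool, lawn) configurations after i turns of the (s,t)-tennis ball process. *)
fun tennis_states :: "(nat \<Rightarrow> nat) \<Rightarrow> (nat \<Rightarrow> nat) \<Rightarrow> nat \<Rightarrow> (nat set \<times> nat set) set" where
  "tennis_states s t 0 = {({}, {})}"
| "tennis_states s t (Suc i) =
     {(P \<union> {balls_upto s i + 1 .. balls_upto s (Suc i)} - T, L \<union> T) | P L T.
        (P, L) \<in> tennis_states s t i \<and>
        T \<subseteq> P \<union> {balls_upto s i + 1 .. balls_upto s (Suc i)} \<and>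
        card T = t (Suc i)}"

definition tennis_count :: "(nat \<Rightarrow> nat) \<Rightarrow> (nat \<Rightarrow> nat) \<Rightarrow> nat \<Rightarrow> nat" where
  "tennis_count s t n = card (snd ` tennis_states s t n)"

(* Cells of a shape lambda given as the list of row lengths; rows and columns 1-indexed *)
definition cells :: "nat list \<Rightarrow> (nat \<times> nat) set" where
  "cells lam = {(i, j). 1 \<le> i \<and> i \<le> length lam \<and> 1 \<le> j \<and> j \<le> lam ! (i - 1)}"

definition SVT :: "nat list \<Rightarrow> (nat \<times> nat \<Rightarrow> nat) \<Rightarrow> (nat \<times> nat \<Rightarrow> nat set) set" where
  "SVT lam rho =
     (let N = (\<Sum>c \<in> cells lam. rho c) in
      {S. (\<forall>c. c \<notin> cells lam \<longrightarrow> S c = {}) \<and>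
          (\<forall>c \<in> cells lam. finite (S c) \<and> card (S c) = rho c) \<and>
          (\<forall>c \<in> cells lam. \<forall>d \<in> cells lam. c \<noteq> d \<longrightarrow> S c \<inter> S d = {}) \<and>
          (\<Union>c \<in> cells lam. S c) = {1..N} \<and>
          (\<forall>i j. (i, j) \<in> cells lam \<and> (i, Suc j) \<in> cells lam \<longrightarrow>
                 (\<forall>x \<in> S (i, j). \<forall>y \<in> S (i, Suc j). x < y)) \<and>
          (\<forall>i j. (i, j) \<in> cells lam \<and> (Suc i, j) \<in> cells lam \<longrightarrow>
                 (\<forall>x \<in> S (i, j). \<forall>y \<in> S (Suc i, j). x < y))})"

end

theory Submission
  imports Defs
begin

text \<open>
  Ball i lands on the lawn exactly when entry i + 1 of the tableau lies in the first row.
  A lawn set L is reachable after n turns iff |L| = t_1 + ... + t_n and, for every k,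
  at least t_1 + ... + t_k of its balls are numbered at most s_1 + ... + s_k.
  In a set-valued tableau of two rows, row-strictness forces every cell to consist of
  consecutive elements (a "rank block") of its row's content, so the tableau is determined
  by the content R of the first row; the column condition at column j then compares the
  last element of a block of R with the first element of a block of the complement, and
  this holds iff R has enough small elements -- which, after the shift by one, is exactly
  the reachability condition above.
\<close>

section \<open>Ranks in finite linearly ordered sets\<close>

definition rank :: "'a::linorder set \<Rightarrow> 'a \<Rightarrow> nat" where
  "rank A x = card {y \<in> A. y < x}"

definition rank_block :: "'a::linorder set \<Rightarrow> nat \<Rightarrow> nat \<Rightarrow> 'a set" where
  "rank_block A a b = {x \<in> A. rank A x \<in> {a..<b}}"

lemma rank_less_card: "finite A \<Longrightarrow> x \<in> A \<Longrightarrow> rank A x < card A"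
  unfolding rank_def by (rule psubset_card_mono) auto

lemma rank_strict_mono: "finite A \<Longrightarrow> x \<in> A \<Longrightarrow> x < y \<Longrightarrow> rank A x < rank A y"
  unfolding rank_def by (rule psubset_card_mono) auto

lemma rank_less_rank_iff:
  "finite A \<Longrightarrow> x \<in> A \<Longrightarrow> y \<in> A \<Longrightarrow> rank A x < rank A y \<longleftrightarrow> x < y"
  by (metis not_less_iff_gr_or_eq order_less_asym rank_strict_mono)

lemma rank_le_rank_iff:
  "finite A \<Longrightarrow> x \<in> A \<Longrightarrow> y \<in> A \<Longrightarrow> rank A x \<le> rank A y \<longleftrightarrow> x \<le> y"
  using rank_less_rank_iff[of A y x] by (simp add: not_less[symmetric])

lemma bij_betw_rank: "finite A \<Longrightarrow> bij_betw (rank A) A {..<card A}"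
proof -
  assume fin: "finite A"
  have inj: "inj_on (rank A) A"
    by (rule inj_onI) (metis fin linorder_neqE less_irrefl rank_strict_mono)
  have "rank A ` A \<subseteq> {..<card A}"
    using rank_less_card[OF fin] by auto
  moreover have "card (rank A ` A) = card {..<card A}"
    using card_image[OF inj] by simp
  ultimately show ?thesis
    unfolding bij_betw_def using inj by (simp add: card_subset_eq)
qed

lemma le_iff_rank_less_card:
  assumes "finite A" "x \<in> A"
  shows "x \<le> M \<longleftrightarrow> rank A x < card {y \<in> A. y \<le> M}"
proof
  assume "x \<le> M"
  then show "rank A x < card {y \<in> A. y \<le> M}"
    unfolding rank_def using assms by (intro psubset_card_mono) auto
next
  assume "rank A x < card {y \<in> A. y \<le> M}"
  moreover have "M < x \<Longrightarrow> card {y \<in> A. y \<le> M} \<le> rank A x"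
    unfolding rank_def using assms by (intro card_mono) auto
  ultimately show "x \<le> M" by (meson not_le)
qed

lemma card_rank_block: "finite A \<Longrightarrow> card (rank_block A a b) = min b (card A) - a"
proof -
  assume fin: "finite A"
  have bij: "bij_betw (rank A) A {..<card A}" by (rule bij_betw_rank[OF fin])
  have "rank A ` rank_block A a b = {a..<min b (card A)}"
  proof
    show "rank A ` rank_block A a b \<subseteq> {a..<min b (card A)}"
      using rank_less_card[OF fin] by (auto simp: rank_block_def)
    show "{a..<min b (card A)} \<subseteq> rank A ` rank_block A a b"
    proof
      fix r assume r: "r \<in> {a..<min b (card A)}"
      then have "r \<in> rank A ` A"
        using bij by (simp add: bij_betw_def)
      then obtain x where "x \<in> A" "rank A x = r" by blast
      with r show "r \<in> rank A ` rank_block A a b" by (auto simp: rank_block_def)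
    qed
  qed
  moreover have "inj_on (rank A) (rank_block A a b)"
    using bij by (auto simp: bij_betw_def rank_block_def intro: inj_on_subset)
  ultimately show ?thesis by (metis card_atLeastLessThan card_image)
qed

lemma rank_block_less:
  assumes "finite A" "x \<in> rank_block A a b" "y \<in> rank_block A c d" "b \<le> c"
  shows "x < y"
  using assms rank_less_rank_iff[of A x y] by (auto simp: rank_block_def)

lemma rank_block_all: "finite A \<Longrightarrow> rank_block A 0 (card A) = A"
  using rank_less_card by (auto simp: rank_block_def)

lemma card_rank_block_0_le:
  assumes "finite A"
  shows "card {x \<in> rank_block A 0 r. x \<le> M} = min r (card {x \<in> A. x \<le> M})"
proof -
  have "{x \<in> rank_block A 0 r. x \<le> M} = rank_block A 0 (min r (card {x \<in> A. x \<le> M}))"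
    using le_iff_rank_less_card[OF assms] by (auto simp: rank_block_def)
  moreover have "card {x \<in> A. x \<le> M} \<le> card A"
    using assms by (intro card_mono) auto
  ultimately show ?thesis using card_rank_block[OF assms] by simp
qed

lemma UN_atLeastLessThan_mono:
  fixes f :: "nat \<Rightarrow> nat"
  assumes "mono f"
  shows "(\<Union>j\<in>{1..m}. {f (j - 1)..<f j}) = {f 0..<f m}"
proof (induction m)
  case (Suc m)
  have "{1..Suc m} = insert (Suc m) {1..m}" by auto
  then have "(\<Union>j\<in>{1..Suc m}. {f (j - 1)..<f j}) = {f 0..<f m} \<union> {f m..<f (Suc m)}"
    using Suc.IH by auto
  also have "\<dots> = {f 0..<f (Suc m)}"
    using monoD[OF assms, of 0 m] monoD[OF assms, of m "Suc m"] by (intro ivl_disj_un_two(3)) auto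
  finally show ?case .
qed simp

lemma UN_rank_block:
  fixes f :: "nat \<Rightarrow> nat"
  assumes "mono f"
  shows "(\<Union>j\<in>{1..m}. rank_block A (f (j - 1)) (f j)) = rank_block A (f 0) (f m)"
proof -
  have "\<And>r. r \<in> {f 0..<f m} \<longleftrightarrow> (\<exists>j\<in>{1..m}. r \<in> {f (j - 1)..<f j})"
    using UN_atLeastLessThan_mono[OF assms, of m] by blast
  then show ?thesis unfolding rank_block_def by blast
qed

lemma mono_partial_sums:
  fixes f :: "nat \<Rightarrow> nat"
  shows "mono (\<lambda>k. \<Sum>l=1..k. f l)"
  by (intro monoI sum_mono2) auto

lemma partial_sum_split_last:
  fixes f :: "nat \<Rightarrow> nat"
  shows "1 \<le> k \<Longrightarrow> (\<Sum>l=1..k. f l) = (\<Sum>l=1..k - 1. f l) + f k"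
  by (cases k) auto

lemma rank_UN_ordered:
  fixes B :: "nat \<Rightarrow> 'a::linorder set"
  assumes fin: "\<And>l. l \<in> {1..m} \<Longrightarrow> finite (B l)"
    and ord: "\<And>l l' x y. l \<in> {1..m} \<Longrightarrow> l' \<in> {1..m} \<Longrightarrow> l < l' \<Longrightarrow> x \<in> B l \<Longrightarrow> y \<in> B l' \<Longrightarrow> x < y"
    and j: "j \<in> {1..m}" and x: "x \<in> B j"
  shows "rank (\<Union>l\<in>{1..m}. B l) x = (\<Sum>l=1..j - 1. card (B l)) + rank (B j) x"
proof -
  let ?A = "\<Union>l\<in>{1..m}. B l"
  have ord_disjoint: "B l \<inter> B l' = {}" if "l \<in> {1..m}" "l' \<in> {1..m}" "l \<noteq> l'" for l l'
    using that ord[of l l'] ord[of l' l] by (cases "l < l'") (auto simp: disjoint_iff)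
  have "{y \<in> ?A. y < x} = (\<Union>l\<in>{1..j - 1}. B l) \<union> {y \<in> B j. y < x}"
  proof (intro equalityI subsetI)
    fix y assume "y \<in> {y \<in> ?A. y < x}"
    then obtain l where l: "l \<in> {1..m}" "y \<in> B l" "y < x" by auto
    then have "\<not> j < l" using ord[OF j l(1) _ x l(2)] by auto
    then show "y \<in> (\<Union>l\<in>{1..j - 1}. B l) \<union> {y \<in> B j. y < x}"
      using l by (cases "l = j") auto
  next
    fix y assume "y \<in> (\<Union>l\<in>{1..j - 1}. B l) \<union> {y \<in> B j. y < x}"
    then show "y \<in> {y \<in> ?A. y < x}"
      using ord[OF _ j _ _ x] j by fastforce
  qed
  moreover have "(\<Union>l\<in>{1..j - 1}. B l) \<inter> {y \<in> B j. y < x} = {}"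
    using ord[OF _ j] j by fastforce
  moreover have "card (\<Union>l\<in>{1..j - 1}. B l) = (\<Sum>l=1..j - 1. card (B l))"
  proof (rule card_UN_disjoint)
    show "\<forall>l\<in>{1..j - 1}. finite (B l)" using fin j by auto
    show "\<forall>l\<in>{1..j - 1}. \<forall>l'\<in>{1..j - 1}. l \<noteq> l' \<longrightarrow> B l \<inter> B l' = {}"
      using ord_disjoint j by (metis atLeastAtMost_iff diff_le_self le_trans)
  qed simp
  moreover have "finite (\<Union>l\<in>{1..j - 1}. B l)" "finite {y \<in> B j. y < x}"
    using fin j by auto
  ultimately show ?thesis
    unfolding rank_def by (simp add: card_Un_disjoint)
qed

lemma ordered_partition_eq_rank_block:
  fixes B :: "nat \<Rightarrow> 'a::linorder set"
  assumes fin: "\<And>l. l \<in> {1..m} \<Longrightarrow> finite (B l)"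
    and ord: "\<And>l l' x y. l \<in> {1..m} \<Longrightarrow> l' \<in> {1..m} \<Longrightarrow> l < l' \<Longrightarrow> x \<in> B l \<Longrightarrow> y \<in> B l' \<Longrightarrow> x < y"
    and j: "j \<in> {1..m}"
  shows "B j = rank_block (\<Union>l\<in>{1..m}. B l) (\<Sum>l=1..j - 1. card (B l)) (\<Sum>l=1..j. card (B l))"
proof -
  define c where "c k = (\<Sum>l=1..k. card (B l))" for k
  have "mono c" unfolding c_def by (rule mono_partial_sums)
  have rank_in: "rank (\<Union>l\<in>{1..m}. B l) x \<in> {c (k - 1)..<c k}" if "k \<in> {1..m}" "x \<in> B k" for k x
  proof -
    have "rank (\<Union>l\<in>{1..m}. B l) x = c (k - 1) + rank (B k) x"
      unfolding c_def by (rule rank_UN_ordered; use fin ord that in blast)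
    then show ?thesis
      using rank_less_card[OF fin[OF that(1)] that(2)]
        partial_sum_split_last[of k "\<lambda>l. card (B l)"] that(1)
      by (simp add: c_def)
  qed
  have "k = j" if "k \<in> {1..m}" "c (k - 1) \<le> r" "r < c k" "c (j - 1) \<le> r" "r < c j" for k r
  proof (rule ccontr)
    assume "k \<noteq> j"
    then have "k \<le> j - 1 \<or> j \<le> k - 1" using j that(1) by auto
    then show False
      using monoD[OF \<open>mono c\<close>, of k "j - 1"] monoD[OF \<open>mono c\<close>, of j "k - 1"] that by auto
  qed
  then have "x \<in> B j" if "x \<in> rank_block (\<Union>l\<in>{1..m}. B l) (c (j - 1)) (c j)" for x
    using that rank_in unfolding rank_block_def by (metis (no_types, lifting) UN_E atLeastLessThan_iff mem_Collect_eq)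
  moreover have "x \<in> rank_block (\<Union>l\<in>{1..m}. B l) (c (j - 1)) (c j)" if "x \<in> B j" for x
    using that rank_in[OF j] j unfolding rank_block_def by blast
  ultimately show ?thesis unfolding c_def by blast
qed

lemma ordered_of_adjacent:
  fixes B :: "nat \<Rightarrow> 'a::linorder set"
  assumes ne: "\<And>l. l \<in> {1..m} \<Longrightarrow> B l \<noteq> {}"
    and adj: "\<And>l x y. 1 \<le> l \<Longrightarrow> Suc l \<le> m \<Longrightarrow> x \<in> B l \<Longrightarrow> y \<in> B (Suc l) \<Longrightarrow> x < y"
    and l: "l \<in> {1..m}" and "l' \<le> m" "l < l'" "x \<in> B l" "y \<in> B l'"
  shows "x < y"
  using assms(4-)
proof (induction l' arbitrary: y)
  case (Suc l')
  show ?case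
  proof (cases "l = l'")
    case True
    then show ?thesis using adj l Suc.prems by auto
  next
    case False
    then obtain z where "z \<in> B l'" using ne l Suc.prems by fastforce
    then have "x < z" "z < y"
      using Suc False l adj[of l' z y] by auto
    then show ?thesis by simp
  qed
qed simp

text \<open>The largest element x0 of the first block and the smallest element y0 of the
  second are both compared with a + b: the ballot inequality holds iff x0 \<le> a + b,
  and fails iff y0 \<le> a + b.\<close>
lemma rank_blocks_complement_less_iff:
  fixes R :: "nat set"
  assumes R: "R \<subseteq> {1..N}" and "a' < a" "a \<le> card R" "b < b'" "b' \<le> card ({1..N} - R)"
  shows "(\<forall>x\<in>rank_block R a' a. \<forall>y\<in>rank_block ({1..N} - R) b b'. x < y)
    \<longleftrightarrow> a \<le> card {x \<in> R. x \<le> a + b}"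
proof -
  define C where "C = {1..N} - R"
  have fin: "finite R" "finite C" using R finite_subset by (auto simp: C_def)
  have cards: "card R + card C = N"
    using R card_Diff_subset[OF fin(1) R] card_mono[OF _ R] by (simp add: C_def)
  have "a - 1 \<in> rank R ` R" "b \<in> rank C ` C"
    using bij_betw_imp_surj_on[OF bij_betw_rank[OF fin(1)]]
      bij_betw_imp_surj_on[OF bij_betw_rank[OF fin(2)]] assms by (auto simp: C_def)
  then obtain x0 y0 where x0: "x0 \<in> R" "rank R x0 = a - 1" and y0: "y0 \<in> C" "rank C y0 = b"
    by (metis imageE)
  have x0_block: "x0 \<in> rank_block R a' a" and y0_block: "y0 \<in> rank_block C b b'"
    using x0 y0 assms by (auto simp: rank_block_def)
  have "card {x \<in> R. x \<le> a + b} + card {y \<in> C. y \<le> a + b} = card {z \<in> {1..N}. z \<le> a + b}"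
    using fin R by (subst card_Un_disjoint[symmetric]) (auto simp: C_def intro!: arg_cong[where f=card])
  also have "\<dots> = a + b"
  proof -
    have "{z \<in> {1..N}. z \<le> a + b} = {1..a + b}" using cards assms by (auto simp: C_def)
    then show ?thesis by simp
  qed
  finally have count: "card {y \<in> C. y \<le> a + b} = a + b - card {x \<in> R. x \<le> a + b}" by simp
  have x0_le_iff: "x0 \<le> a + b \<longleftrightarrow> a \<le> card {x \<in> R. x \<le> a + b}"
    using le_iff_rank_less_card[OF fin(1) x0(1), of "a + b"] x0(2) assms by linarith
  have y0_le_iff: "y0 \<le> a + b \<longleftrightarrow> \<not> a \<le> card {x \<in> R. x \<le> a + b}"
    using le_iff_rank_less_card[OF fin(2) y0(1), of "a + b"] y0(2) count by linarith
  show ?thesis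
  proof
    assume "\<forall>x\<in>rank_block R a' a. \<forall>y\<in>rank_block ({1..N} - R) b b'. x < y"
    then have "x0 < y0" using x0_block y0_block by (simp add: C_def)
    then show "a \<le> card {x \<in> R. x \<le> a + b}" using x0_le_iff y0_le_iff by linarith
  next
    assume "a \<le> card {x \<in> R. x \<le> a + b}"
    then have "x0 < y0" using x0_le_iff y0_le_iff by linarith
    moreover have "x \<le> x0" if "x \<in> rank_block R a' a" for x
      using that x0 rank_le_rank_iff[OF fin(1), of x x0] by (auto simp: rank_block_def)
    moreover have "y0 \<le> y" if "y \<in> rank_block C b b'" for y
      using that y0 rank_le_rank_iff[OF fin(2), of y0 y] by (auto simp: rank_block_def)
    ultimately show "\<forall>x\<in>rank_block R a' a. \<forall>y\<in>rank_block ({1..N} - R) b b'. x < y"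
      by (fastforce simp: C_def)
  qed
qed

section \<open>Two-row set-valued tableaux\<close>

lemma mem_cells_two_rows: "(i, j) \<in> cells [m, m] \<longleftrightarrow> (i = 1 \<or> i = 2) \<and> j \<in> {1..m}"
  by (auto simp: cells_def nth_Cons split: nat.splits)

definition row_psum :: "(nat \<times> nat \<Rightarrow> nat) \<Rightarrow> nat \<Rightarrow> nat \<Rightarrow> nat" where
  "row_psum rho i j = (\<Sum>l=1..j. rho (i, l))"

lemma mono_row_psum: "mono (row_psum rho i)"
  unfolding row_psum_def by (rule mono_partial_sums)

lemma row_psum_pred: "1 \<le> j \<Longrightarrow> row_psum rho i j = row_psum rho i (j - 1) + rho (i, j)"
  unfolding row_psum_def by (rule partial_sum_split_last)

lemma cells_two_rows: "cells [m, m] = {1, 2} \<times> {1..m}"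
  using mem_cells_two_rows by auto

lemma sum_cells_two_rows: "(\<Sum>c\<in>cells [m, m]. rho c) = row_psum rho 1 m + row_psum rho 2 m"
proof -
  have "(\<Sum>c\<in>cells [m, m]. rho c) = (\<Sum>i\<in>{1, 2::nat}. \<Sum>j=1..m. rho (i, j))"
    by (simp add: cells_two_rows sum.cartesian_product)
  then show ?thesis by (simp add: row_psum_def)
qed

lemma SVT_outside_cells: "S \<in> SVT lam rho \<Longrightarrow> c \<notin> cells lam \<Longrightarrow> S c = {}"
  by (cases c) (simp add: SVT_def Let_def)

lemma SVT_card_cell: "S \<in> SVT lam rho \<Longrightarrow> c \<in> cells lam \<Longrightarrow> finite (S c) \<and> card (S c) = rho c"
  by (simp add: SVT_def Let_def)

lemma SVT_cells_disjoint:
  "S \<in> SVT lam rho \<Longrightarrow> c \<in> cells lam \<Longrightarrow> d \<in> cells lam \<Longrightarrow> c \<noteq> d \<Longrightarrow> S c \<inter> S d = {}"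
  by (simp add: SVT_def Let_def)

lemma SVT_UN_cells: "S \<in> SVT lam rho \<Longrightarrow> (\<Union>c\<in>cells lam. S c) = {1..\<Sum>c\<in>cells lam. rho c}"
  unfolding SVT_def Let_def by blast

lemma SVT_row_less:
  "S \<in> SVT lam rho \<Longrightarrow> (i, j) \<in> cells lam \<Longrightarrow> (i, Suc j) \<in> cells lam \<Longrightarrow>
    x \<in> S (i, j) \<Longrightarrow> y \<in> S (i, Suc j) \<Longrightarrow> x < y"
  unfolding SVT_def Let_def by blast

locale two_row_density =
  fixes m :: nat and rho :: "nat \<times> nat \<Rightarrow> nat"
  assumes rho_pos: "c \<in> cells [m, m] \<Longrightarrow> 0 < rho c"
begin

abbreviation total :: nat where
  "total \<equiv> row_psum rho 1 m + row_psum rho 2 m"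

definition row_content :: "nat set \<Rightarrow> nat \<Rightarrow> nat set" where
  "row_content R i = (if i = 1 then R else {1..total} - R)"

definition tableau :: "nat set \<Rightarrow> nat \<times> nat \<Rightarrow> nat set" where
  "tableau R = (\<lambda>(i, j). if (i, j) \<in> cells [m, m]
     then rank_block (row_content R i) (row_psum rho i (j - 1)) (row_psum rho i j) else {})"

text \<open>R is the content of the first row; the inequality at j is the column condition
  at column j.\<close>
definition ballot_sets :: "nat set set" where
  "ballot_sets = {R. R \<subseteq> {1..total} \<and> card R = row_psum rho 1 m \<and>
     (\<forall>j\<in>{1..m}. row_psum rho 1 j \<le> card {x \<in> R. x \<le> row_psum rho 1 j + row_psum rho 2 (j - 1)})}"

lemma finite_row_content: "finite R \<Longrightarrow> finite (row_content R i)"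
  by (simp add: row_content_def)

lemma card_row_content:
  assumes "R \<subseteq> {1..total}" "card R = row_psum rho 1 m" "i = 1 \<or> i = 2"
  shows "card (row_content R i) = row_psum rho i m"
  using assms card_Diff_subset[of R "{1..total}"] finite_subset[OF assms(1)]
  by (auto simp: row_content_def)

lemma tableau_cell:
  "(i, j) \<in> cells [m, m] \<Longrightarrow>
    tableau R (i, j) = rank_block (row_content R i) (row_psum rho i (j - 1)) (row_psum rho i j)"
  by (simp add: tableau_def)

lemma tableau_subset_row_content: "tableau R (i, j) \<subseteq> row_content R i"
  by (auto simp: tableau_def rank_block_def)

context
  fixes R :: "nat set"
  assumes R_sub: "R \<subseteq> {1..total}" and card_R: "card R = row_psum rho 1 m"
begin

lemma finite_first_row: "finite R"
  using R_sub finite_subset by blast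

lemma card_tableau_cell:
  assumes "(i, j) \<in> cells [m, m]"
  shows "card (tableau R (i, j)) = rho (i, j)"
proof -
  have "row_psum rho i j \<le> row_psum rho i m" "1 \<le> j" "i = 1 \<or> i = 2"
    using assms mono_row_psum[of rho i] by (auto simp: mem_cells_two_rows dest: monoD)
  then show ?thesis
    using assms card_rank_block[OF finite_row_content[OF finite_first_row]] card_row_content[OF R_sub card_R]
      row_psum_pred[of j rho i] by (simp add: tableau_cell)
qed

lemma tableau_row_less:
  assumes "(i, j) \<in> cells [m, m]" "(i, j') \<in> cells [m, m]" "j < j'"
    and "x \<in> tableau R (i, j)" "y \<in> tableau R (i, j')"
  shows "x < y"
proof -
  have x: "x \<in> rank_block (row_content R i) (row_psum rho i (j - 1)) (row_psum rho i j)"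
    using assms(4) tableau_cell[OF assms(1)] by simp
  have y: "y \<in> rank_block (row_content R i) (row_psum rho i (j' - 1)) (row_psum rho i j')"
    using assms(5) tableau_cell[OF assms(2)] by simp
  have "row_psum rho i j \<le> row_psum rho i (j' - 1)"
    using assms(3) monoD[OF mono_row_psum, of j "j' - 1"] by simp
  then show ?thesis
    by (rule rank_block_less[OF finite_row_content[OF finite_first_row] x y])
qed

lemma UN_tableau_row:
  assumes "i = 1 \<or> i = 2"
  shows "(\<Union>j\<in>{1..m}. tableau R (i, j)) = row_content R i"
proof -
  have "(\<Union>j\<in>{1..m}. tableau R (i, j))
      = (\<Union>j\<in>{1..m}. rank_block (row_content R i) (row_psum rho i (j - 1)) (row_psum rho i j))"
    using assms by (simp add: tableau_cell mem_cells_two_rows)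
  also have "\<dots> = rank_block (row_content R i) 0 (card (row_content R i))"
    using UN_rank_block[OF mono_row_psum] card_row_content[OF R_sub card_R assms]
    by (simp add: row_psum_def)
  also have "\<dots> = row_content R i"
    by (rule rank_block_all[OF finite_row_content[OF finite_first_row]])
  finally show ?thesis .
qed

lemma UN_tableau_cells: "(\<Union>c\<in>cells [m, m]. tableau R c) = {1..total}"
proof -
  have "(\<Union>c\<in>cells [m, m]. tableau R c)
      = (\<Union>j\<in>{1..m}. tableau R (1, j)) \<union> (\<Union>j\<in>{1..m}. tableau R (2, j))"
    by (auto simp: cells_two_rows)
  also have "\<dots> = {1..total}"
    using R_sub UN_tableau_row[of 1] UN_tableau_row[of 2] by (auto simp: row_content_def)
  finally show ?thesis .
qed

lemma tableau_column_less_iff: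
  assumes "j \<in> {1..m}"
  shows "(\<forall>x\<in>tableau R (1, j). \<forall>y\<in>tableau R (2, j). x < y)
    \<longleftrightarrow> row_psum rho 1 j \<le> card {x \<in> R. x \<le> row_psum rho 1 j + row_psum rho 2 (j - 1)}"
proof -
  have cells: "(1, j) \<in> cells [m, m]" "(2, j) \<in> cells [m, m]"
    using assms by (auto simp: mem_cells_two_rows)
  have "tableau R (1, j) = rank_block R (row_psum rho 1 (j - 1)) (row_psum rho 1 j)"
    "tableau R (2, j) = rank_block ({1..total} - R) (row_psum rho 2 (j - 1)) (row_psum rho 2 j)"
    unfolding tableau_cell[OF cells(1)] tableau_cell[OF cells(2)] by (simp_all add: row_content_def)
  moreover have "row_psum rho 1 j \<le> row_psum rho 1 m" "row_psum rho 2 j \<le> row_psum rho 2 m"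
    using assms monoD[OF mono_row_psum] by auto
  moreover have "row_psum rho 1 (j - 1) < row_psum rho 1 j" "row_psum rho 2 (j - 1) < row_psum rho 2 j"
    using row_psum_pred[of j rho] rho_pos[OF cells(1)] rho_pos[OF cells(2)] assms by auto
  ultimately show ?thesis
    using rank_blocks_complement_less_iff[OF R_sub] card_R card_row_content[OF R_sub card_R, of 2]
    by (simp add: row_content_def)
qed

lemma tableau_cells_disjoint:
  assumes c: "(i, j) \<in> cells [m, m]" and d: "(i', j') \<in> cells [m, m]" and "(i, j) \<noteq> (i', j')"
  shows "tableau R (i, j) \<inter> tableau R (i', j') = {}"
proof (cases "i = i'")
  case True
  have "x \<notin> tableau R (i', j')" if x: "x \<in> tableau R (i, j)" for x
  proof
    assume x': "x \<in> tableau R (i', j')"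
    consider "j < j'" | "j' < j" using \<open>(i, j) \<noteq> (i', j')\<close> True by fastforce
    then show False
    proof cases
      case 1
      then show False using tableau_row_less[OF c d[folded True] 1 x x'[folded True]] by simp
    next
      case 2
      then show False using tableau_row_less[OF d[folded True] c 2 x'[folded True] x] by simp
    qed
  qed
  then show ?thesis by blast
next
  case False
  then have "row_content R i \<inter> row_content R i' = {}"
    using c d by (auto simp: mem_cells_two_rows row_content_def)
  then show ?thesis
    using tableau_subset_row_content[of R i j] tableau_subset_row_content[of R i' j'] by blast
qed

lemma tableau_in_SVT_iff: "tableau R \<in> SVT [m, m] rho \<longleftrightarrow> R \<in> ballot_sets"
proof -
  have "\<forall>c. c \<notin> cells [m, m] \<longrightarrow> tableau R c = {}"
    by (auto simp: tableau_def)
  moreover have "\<forall>c\<in>cells [m, m]. finite (tableau R c) \<and> card (tableau R c) = rho c"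
    using card_tableau_cell rho_pos by (auto intro: card_ge_0_finite)
  moreover have "\<forall>i j. (i, j) \<in> cells [m, m] \<and> (i, Suc j) \<in> cells [m, m] \<longrightarrow>
      (\<forall>x\<in>tableau R (i, j). \<forall>y\<in>tableau R (i, Suc j). x < y)"
    using tableau_row_less by blast
  moreover have "(\<forall>i j. (i, j) \<in> cells [m, m] \<and> (Suc i, j) \<in> cells [m, m] \<longrightarrow>
      (\<forall>x\<in>tableau R (i, j). \<forall>y\<in>tableau R (Suc i, j). x < y))
    \<longleftrightarrow> (\<forall>j\<in>{1..m}. row_psum rho 1 j \<le> card {x \<in> R. x \<le> row_psum rho 1 j + row_psum rho 2 (j - 1)})"
  proof -
    have "(i, j) \<in> cells [m, m] \<and> (Suc i, j) \<in> cells [m, m] \<longleftrightarrow> i = 1 \<and> j \<in> {1..m}" for i j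
      by (auto simp: mem_cells_two_rows)
    then show ?thesis using tableau_column_less_iff by (auto simp: numeral_2_eq_2)
  qed
  moreover have "\<forall>c\<in>cells [m, m]. \<forall>d\<in>cells [m, m]. c \<noteq> d \<longrightarrow> tableau R c \<inter> tableau R d = {}"
    using tableau_cells_disjoint by fast
  ultimately show ?thesis
    unfolding SVT_def Let_def sum_cells_two_rows ballot_sets_def
    using UN_tableau_cells R_sub card_R by simp
qed

end

context
  fixes S :: "nat \<times> nat \<Rightarrow> nat set"
  assumes S: "S \<in> SVT [m, m] rho"
begin

lemma SVT_row_ordered:
  assumes i: "i = 1 \<or> i = 2" and "l \<in> {1..m}" "l' \<in> {1..m}" "l < l'" "x \<in> S (i, l)" "y \<in> S (i, l')"
  shows "x < y"
proof (rule ordered_of_adjacent[where B = "\<lambda>l. S (i, l)"])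
  fix l assume "l \<in> {1..m}"
  then have "(i, l) \<in> cells [m, m]" using i by (simp add: mem_cells_two_rows)
  then show "S (i, l) \<noteq> {}"
    using SVT_card_cell[OF S] rho_pos by fastforce
next
  fix l x y assume "1 \<le> l" "Suc l \<le> m" "x \<in> S (i, l)" "y \<in> S (i, Suc l)"
  then show "x < y"
    using SVT_row_less[OF S] i by (simp add: mem_cells_two_rows)
qed (use assms in auto)

lemma SVT_row_eq_rank_block:
  assumes i: "i = 1 \<or> i = 2" and j: "j \<in> {1..m}"
  shows "S (i, j) = rank_block (\<Union>l\<in>{1..m}. S (i, l)) (row_psum rho i (j - 1)) (row_psum rho i j)"
proof -
  have card: "finite (S (i, l)) \<and> card (S (i, l)) = rho (i, l)" if "l \<in> {1..m}" for l
    using that i SVT_card_cell[OF S] by (simp add: mem_cells_two_rows)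
  have "S (i, j) = rank_block (\<Union>l\<in>{1..m}. S (i, l))
      (\<Sum>l=1..j - 1. card (S (i, l))) (\<Sum>l=1..j. card (S (i, l)))"
    by (rule ordered_partition_eq_rank_block; use card SVT_row_ordered[OF i] j in blast)
  moreover have psum: "(\<Sum>l=1..k. card (S (i, l))) = row_psum rho i k" if "k \<le> m" for k
    unfolding row_psum_def using card that by (intro sum.cong) auto
  moreover have "j - 1 \<le> m" "j \<le> m" using j by auto
  ultimately show ?thesis by (simp only: psum)
qed

lemma SVT_row_content:
  defines "R \<equiv> \<Union>j\<in>{1..m}. S (1, j)"
  assumes i: "i = 1 \<or> i = 2"
  shows "row_content R i = (\<Union>j\<in>{1..m}. S (i, j))"
proof -
  have "(\<Union>c\<in>cells [m, m]. S c) = R \<union> (\<Union>j\<in>{1..m}. S (2, j))"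
    unfolding R_def cells_two_rows by blast
  moreover have "R \<inter> (\<Union>j\<in>{1..m}. S (2, j)) = {}"
    using SVT_cells_disjoint[OF S] unfolding R_def by (fastforce simp: mem_cells_two_rows)
  ultimately show ?thesis
    using SVT_UN_cells[OF S] i by (auto simp: row_content_def sum_cells_two_rows R_def)
qed

lemma SVT_first_row:
  defines "R \<equiv> \<Union>j\<in>{1..m}. S (1, j)"
  shows "R \<subseteq> {1..total}" "card R = row_psum rho 1 m" "tableau R = S"
proof -
  show "R \<subseteq> {1..total}"
    using SVT_UN_cells[OF S, unfolded sum_cells_two_rows, unfolded cells_two_rows]
    unfolding R_def by blast
  have "card R = (\<Sum>j=1..m. card (S (1, j)))"
    unfolding R_def
  proof (rule card_UN_disjoint)
    show "\<forall>j\<in>{1..m}. finite (S (1, j))"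
      using SVT_card_cell[OF S] by (simp add: mem_cells_two_rows)
    show "\<forall>j\<in>{1..m}. \<forall>j'\<in>{1..m}. j \<noteq> j' \<longrightarrow> S (1, j) \<inter> S (1, j') = {}"
      using SVT_cells_disjoint[OF S] by (simp add: mem_cells_two_rows)
  qed simp
  also have "\<dots> = row_psum rho 1 m"
    unfolding row_psum_def using SVT_card_cell[OF S] by (intro sum.cong) (auto simp: mem_cells_two_rows)
  finally show "card R = row_psum rho 1 m" .
  show "tableau R = S"
  proof
    fix c :: "nat \<times> nat"
    obtain i j where c: "c = (i, j)" by fastforce
    show "tableau R c = S c"
    proof (cases "c \<in> cells [m, m]")
      case True
      then have "i = 1 \<or> i = 2" "j \<in> {1..m}" using c by (auto simp: mem_cells_two_rows)
      then show ?thesis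
        using True c SVT_row_content[of i] SVT_row_eq_rank_block[of i j]
        by (simp add: tableau_cell R_def)
    next
      case False
      then show ?thesis using SVT_outside_cells[OF S] by (auto simp: tableau_def c)
    qed
  qed
qed

end

theorem bij_betw_tableau_SVT: "bij_betw tableau ballot_sets (SVT [m, m] rho)"
proof (rule bij_betw_byWitness[where f' = "\<lambda>S. \<Union>j\<in>{1..m}. S (1, j)"])
  show "\<forall>R\<in>ballot_sets. (\<Union>j\<in>{1..m}. tableau R (1, j)) = R"
    using UN_tableau_row[of _ 1] by (simp add: ballot_sets_def row_content_def)
  show "\<forall>S\<in>SVT [m, m] rho. tableau (\<Union>j\<in>{1..m}. S (1, j)) = S"
    using SVT_first_row(3) by blast
  show "tableau ` ballot_sets \<subseteq> SVT [m, m] rho"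
    using tableau_in_SVT_iff by (auto simp: ballot_sets_def)
  show "(\<lambda>S. \<Union>j\<in>{1..m}. S (1, j)) ` SVT [m, m] rho \<subseteq> ballot_sets"
  proof
    fix R assume "R \<in> (\<lambda>S. \<Union>j\<in>{1..m}. S (1, j)) ` SVT [m, m] rho"
    then obtain S where S: "S \<in> SVT [m, m] rho" and R: "R = (\<Union>j\<in>{1..m}. S (1, j))" by blast
    then show "R \<in> ballot_sets"
      using SVT_first_row[OF S] tableau_in_SVT_iff[of R] by simp
  qed
qed

end

section \<open>The tennis ball process\<close>

lemma balls_upto_0 [simp]: "balls_upto s 0 = 0"
  by (simp add: balls_upto_def)

lemma balls_upto_Suc [simp]: "balls_upto s (Suc i) = balls_upto s i + s (Suc i)"
  by (simp add: balls_upto_def)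

lemma mono_balls_upto: "mono (balls_upto s)"
  unfolding balls_upto_def by (rule mono_partial_sums)

definition lawn_sets :: "(nat \<Rightarrow> nat) \<Rightarrow> (nat \<Rightarrow> nat) \<Rightarrow> nat \<Rightarrow> nat set set" where
  "lawn_sets s t i = {L. L \<subseteq> {1..balls_upto s i} \<and> card L = balls_upto t i \<and>
     (\<forall>k\<le>i. balls_upto t k \<le> card {x \<in> L. x \<le> balls_upto s k})}"

lemma lawn_sets_Suc_intro:
  assumes L: "L \<in> lawn_sets s t i"
    and T: "T \<subseteq> ({1..balls_upto s i} - L) \<union> {balls_upto s i + 1..balls_upto s (Suc i)}"
    and card_T: "card T = t (Suc i)"
  shows "L \<union> T \<in> lawn_sets s t (Suc i)"
proof -
  have L_sub: "L \<subseteq> {1..balls_upto s i}" and card_L: "card L = balls_upto t i"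
    and ballot: "\<And>k. k \<le> i \<Longrightarrow> balls_upto t k \<le> card {x \<in> L. x \<le> balls_upto s k}"
    using L by (auto simp: lawn_sets_def)
  have fin: "finite L" "finite T"
    using finite_subset[OF L_sub] finite_subset[OF T] by auto
  have LT_sub: "L \<union> T \<subseteq> {1..balls_upto s (Suc i)}"
    using L_sub T by auto
  have "L \<inter> T = {}" using L_sub T by fastforce
  then have card_LT: "card (L \<union> T) = balls_upto t (Suc i)"
    using card_T card_L fin by (simp add: card_Un_disjoint)
  have "balls_upto t k \<le> card {x \<in> L \<union> T. x \<le> balls_upto s k}" if "k \<le> Suc i" for k
  proof (cases "k = Suc i")
    case True
    then have "{x \<in> L \<union> T. x \<le> balls_upto s k} = L \<union> T" using LT_sub by auto
    then show ?thesis using True card_LT by simp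
  next
    case False
    then have "balls_upto t k \<le> card {x \<in> L. x \<le> balls_upto s k}" using that ballot by simp
    also have "\<dots> \<le> card {x \<in> L \<union> T. x \<le> balls_upto s k}"
      using fin by (intro card_mono) auto
    finally show ?thesis .
  qed
  then show ?thesis using LT_sub card_LT by (simp add: lawn_sets_def)
qed

text \<open>The balls thrown in the first i turns can be taken to be the smallest ones of L.\<close>
lemma lawn_sets_Suc_elim:
  assumes L: "L \<in> lawn_sets s t (Suc i)"
  obtains L' T where "L' \<in> lawn_sets s t i"
    "T \<subseteq> ({1..balls_upto s i} - L') \<union> {balls_upto s i + 1..balls_upto s (Suc i)}"
    "card T = t (Suc i)" "L = L' \<union> T"
proof -
  have L_sub: "L \<subseteq> {1..balls_upto s (Suc i)}" and card_L: "card L = balls_upto t (Suc i)"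
    and ballot: "\<And>k. k \<le> Suc i \<Longrightarrow> balls_upto t k \<le> card {x \<in> L. x \<le> balls_upto s k}"
    using L by (auto simp: lawn_sets_def)
  have fin: "finite L" using L_sub finite_subset by blast
  define L' where "L' = rank_block L 0 (balls_upto t i)"
  have card_L': "card L' = balls_upto t i"
    using card_rank_block[OF fin] card_L by (simp add: L'_def)
  have count_L': "card {x \<in> L'. x \<le> M} = min (balls_upto t i) (card {x \<in> L. x \<le> M})" for M
    unfolding L'_def by (rule card_rank_block_0_le[OF fin])
  have "L' \<subseteq> L" by (auto simp: L'_def rank_block_def)
  have "{x \<in> L'. x \<le> balls_upto s i} = L'"
  proof (rule card_subset_eq)
    show "finite L'" using \<open>L' \<subseteq> L\<close> fin finite_subset by blast
    show "card {x \<in> L'. x \<le> balls_upto s i} = card L'"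
      using count_L' ballot[of i] card_L' by simp
  qed auto
  then have L'_sub: "L' \<subseteq> {1..balls_upto s i}" using \<open>L' \<subseteq> L\<close> L_sub by fastforce
  have "balls_upto t k \<le> card {x \<in> L'. x \<le> balls_upto s k}" if "k \<le> i" for k
    using count_L' ballot[of k] that monoD[OF mono_balls_upto, of k i] by simp
  then have "L' \<in> lawn_sets s t i"
    using L'_sub card_L' by (simp add: lawn_sets_def)
  moreover have "L - L' \<subseteq> ({1..balls_upto s i} - L') \<union> {balls_upto s i + 1..balls_upto s (Suc i)}"
    using L_sub by auto
  moreover have "card (L - L') = t (Suc i)"
    using card_Diff_subset[OF _ \<open>L' \<subseteq> L\<close>] fin card_L card_L' finite_subset[OF \<open>L' \<subseteq> L\<close>] by simp
  moreover have "L = L' \<union> (L - L')" using \<open>L' \<subseteq> L\<close> by blast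
  ultimately show ?thesis by (rule that)
qed

lemma tennis_states_eq:
  "tennis_states s t i = (\<lambda>L. ({1..balls_upto s i} - L, L)) ` lawn_sets s t i"
proof (induction i)
  case 0
  have "lawn_sets s t 0 = {{}}"
    unfolding lawn_sets_def by auto
  then show ?case by simp
next
  case (Suc i)
  let ?new = "{balls_upto s i + 1..balls_upto s (Suc i)}"
  have pool: "({1..balls_upto s i} - L) \<union> ?new - T = {1..balls_upto s (Suc i)} - (L \<union> T)"
    if "L \<in> lawn_sets s t i" for L T
    using that by (auto simp: lawn_sets_def)
  show ?case
  proof (intro set_eqI iffI)
    fix x assume "x \<in> tennis_states s t (Suc i)"
    then obtain L T where "L \<in> lawn_sets s t i" "T \<subseteq> ({1..balls_upto s i} - L) \<union> ?new"
      "card T = t (Suc i)" "x = (({1..balls_upto s i} - L) \<union> ?new - T, L \<union> T)"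
      unfolding tennis_states.simps Suc.IH by blast
    then have "L \<union> T \<in> lawn_sets s t (Suc i)"
      "x = ({1..balls_upto s (Suc i)} - (L \<union> T), L \<union> T)"
      using pool lawn_sets_Suc_intro by auto
    then show "x \<in> (\<lambda>L. ({1..balls_upto s (Suc i)} - L, L)) ` lawn_sets s t (Suc i)"
      by blast
  next
    fix x assume "x \<in> (\<lambda>L. ({1..balls_upto s (Suc i)} - L, L)) ` lawn_sets s t (Suc i)"
    then obtain L T where L: "L \<in> lawn_sets s t i" and "T \<subseteq> ({1..balls_upto s i} - L) \<union> ?new"
      "card T = t (Suc i)" and x: "x = ({1..balls_upto s (Suc i)} - (L \<union> T), L \<union> T)"
      by (auto elim!: lawn_sets_Suc_elim)
    then have "(({1..balls_upto s i} - L) \<union> ?new - T, L \<union> T) \<in> tennis_states s t (Suc i)"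
      unfolding tennis_states.simps Suc.IH by blast
    then show "x \<in> tennis_states s t (Suc i)"
      unfolding x pool[OF L] .
  qed
qed

lemma tennis_count_eq_card_lawn_sets: "tennis_count s t n = card (lawn_sets s t n)"
proof -
  have "snd ` tennis_states s t n = lawn_sets s t n"
    unfolding tennis_states_eq by force
  then show ?thesis by (simp add: tennis_count_def)
qed

lemma balls_upto_diff:
  assumes "\<forall>i\<in>{1..k}. t i \<le> s i"
  shows "balls_upto s k = balls_upto t k + balls_upto (\<lambda>i. s i - t i) k"
  unfolding balls_upto_def sum.distrib[symmetric] using assms by (intro sum.cong) auto

lemma card_shift_atMost:
  assumes "0 \<notin> L"
  shows "card {x \<in> insert 1 (Suc ` L). x \<le> Suc M} = Suc (card {x \<in> L. x \<le> M})"
proof -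
  have "{x \<in> insert 1 (Suc ` L). x \<le> Suc M} = insert 1 (Suc ` {x \<in> L. x \<le> M})"
    by auto
  moreover have "1 \<notin> Suc ` {x \<in> L. x \<le> M}" "finite {x \<in> L. x \<le> M}"
    using assms by auto
  ultimately show ?thesis by (simp add: card_image)
qed

definition tennis_density :: "(nat \<Rightarrow> nat) \<Rightarrow> (nat \<Rightarrow> nat) \<Rightarrow> nat \<Rightarrow> nat \<times> nat \<Rightarrow> nat" where
  "tennis_density s t n = (\<lambda>(i, j). if i = 1 then (if j = 1 then 1 else t (j - 1))
     else (if j = n + 1 then 1 else s j - t j))"

lemma row_psum_tennis_density_1:
  "row_psum (tennis_density s t n) 1 (Suc k) = Suc (balls_upto t k)"
  by (induction k) (simp_all add: row_psum_def tennis_density_def)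

lemma row_psum_tennis_density_2:
  "k \<le> n \<Longrightarrow> row_psum (tennis_density s t n) 2 k = balls_upto (\<lambda>i. s i - t i) k"
  unfolding row_psum_def balls_upto_def by (intro sum.cong) (auto simp: tennis_density_def)

context
  fixes s t :: "nat \<Rightarrow> nat" and n :: nat
  assumes st: "\<forall>i\<in>{1..n}. 0 < t i \<and> t i < s i"
begin

lemma two_row_density_tennis: "two_row_density (n + 1) (tennis_density s t n)"
proof
  fix c assume "c \<in> cells [n + 1, n + 1]"
  then obtain i j where c: "c = (i, j)" "i = 1 \<or> i = 2" and j: "j \<in> {1..n + 1}"
    by (metis mem_cells_two_rows prod.exhaust)
  have "j \<noteq> 1 \<Longrightarrow> j - 1 \<in> {1..n}" "j \<noteq> n + 1 \<Longrightarrow> j \<in> {1..n}"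
    using j by auto
  then have "j \<noteq> 1 \<Longrightarrow> 0 < t (j - 1)" "j \<noteq> n + 1 \<Longrightarrow> t j < s j"
    using st by auto
  then show "0 < tennis_density s t n c"
    using c by (auto simp: tennis_density_def)
qed

lemma tennis_ballot_sets:
  "two_row_density.ballot_sets (n + 1) (tennis_density s t n) =
    {R. R \<subseteq> {1..balls_upto s n + 2} \<and> card R = Suc (balls_upto t n) \<and>
      (\<forall>k\<le>n. Suc (balls_upto t k) \<le> card {x \<in> R. x \<le> Suc (balls_upto s k)})}"
proof -
  let ?rho = "tennis_density s t n"
  have diff: "balls_upto s k = balls_upto t k + balls_upto (\<lambda>i. s i - t i) k" if "k \<le> n" for k
    using st that by (intro balls_upto_diff) (meson atLeastAtMost_iff le_trans less_imp_le)
  have psum_1: "row_psum ?rho 1 (n + 1) = Suc (balls_upto t n)"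
    using row_psum_tennis_density_1 by simp
  have psum_2: "row_psum ?rho 2 (n + 1) = Suc (balls_upto (\<lambda>i. s i - t i) n)"
    using row_psum_pred[of "n + 1" ?rho 2] row_psum_tennis_density_2[of n]
    by (simp add: tennis_density_def)
  have ballot_step: "row_psum ?rho 1 (Suc k) + row_psum ?rho 2 (Suc k - 1) = Suc (balls_upto s k)"
    if "k \<le> n" for k
    using that diff[OF that] row_psum_tennis_density_1 row_psum_tennis_density_2 by simp
  have "{1..n + 1} = Suc ` {..n}"
    by (simp add: image_Suc_atLeastAtMost atMost_atLeast0)
  then have "(\<forall>j\<in>{1..n + 1}. row_psum ?rho 1 j \<le> card {x \<in> R. x \<le> row_psum ?rho 1 j + row_psum ?rho 2 (j - 1)})
      \<longleftrightarrow> (\<forall>k\<le>n. Suc (balls_upto t k) \<le> card {x \<in> R. x \<le> Suc (balls_upto s k)})" for R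
    using ballot_step row_psum_tennis_density_1 by simp (simp add: Ball_def)
  then show ?thesis
    unfolding two_row_density.ballot_sets_def[OF two_row_density_tennis] psum_1 psum_2
    by (simp add: diff[of n])
qed

lemma shift_mem_tennis_ballot_sets_iff:
  assumes fin: "finite L" and "0 \<notin> L"
  shows "insert 1 (Suc ` L) \<in> two_row_density.ballot_sets (n + 1) (tennis_density s t n)
    \<longleftrightarrow> L \<in> lawn_sets s t n"
proof -
  have card_shift: "card (insert 1 (Suc ` L)) = Suc (card L)"
    using assms by (simp add: card_image image_iff)
  have count: "card {x \<in> insert 1 (Suc ` L). x \<le> Suc M} = Suc (card {x \<in> L. x \<le> M})" for M
    using card_shift_atMost \<open>0 \<notin> L\<close> .
  have sub: "insert 1 (Suc ` L) \<subseteq> {1..balls_upto s n + 2} \<longleftrightarrow> L \<subseteq> {1..balls_upto s n + 1}"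
    using \<open>0 \<notin> L\<close> by (auto simp: subset_iff) (metis Suc_leI not_gr0)
  have shifted: "insert 1 (Suc ` L) \<in> two_row_density.ballot_sets (n + 1) (tennis_density s t n)
    \<longleftrightarrow> L \<subseteq> {1..balls_upto s n + 1} \<and> card L = balls_upto t n \<and>
      (\<forall>k\<le>n. balls_upto t k \<le> card {x \<in> L. x \<le> balls_upto s k})"
    unfolding tennis_ballot_sets mem_Collect_eq by (simp only: card_shift count sub Suc_le_mono nat.inject)
  have bounded: "L \<subseteq> {1..balls_upto s n}"
    if "L \<subseteq> {1..balls_upto s n + 1}" "card L \<le> card {x \<in> L. x \<le> balls_upto s n}"
  proof -
    have "card {x \<in> L. x \<le> balls_upto s n} \<le> card L"
      using fin by (intro card_mono) auto
    then have "{x \<in> L. x \<le> balls_upto s n} = L"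
      using that(2) fin by (intro card_subset_eq) auto
    then have "\<forall>x\<in>L. x \<le> balls_upto s n" by blast
    then show ?thesis using that(1) by auto
  qed
  show ?thesis
  proof
    assume "insert 1 (Suc ` L) \<in> two_row_density.ballot_sets (n + 1) (tennis_density s t n)"
    then have "L \<subseteq> {1..balls_upto s n + 1}" "card L = balls_upto t n"
      and ballot: "\<forall>k\<le>n. balls_upto t k \<le> card {x \<in> L. x \<le> balls_upto s k}"
      using shifted by blast+
    moreover have "L \<subseteq> {1..balls_upto s n}"
      using bounded calculation ballot by simp
    ultimately show "L \<in> lawn_sets s t n" by (simp add: lawn_sets_def)
  next
    assume "L \<in> lawn_sets s t n"
    moreover have "{1..balls_upto s n} \<subseteq> {1..balls_upto s n + 1}" by auto
    ultimately show "insert 1 (Suc ` L) \<in> two_row_density.ballot_sets (n + 1) (tennis_density s t n)"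
      unfolding shifted lawn_sets_def by blast
  qed
qed

text \<open>Tableau entries are ball numbers shifted by one, the entry 1 filling cell (1, 1).\<close>
lemma bij_betw_shift_lawn_sets:
  "bij_betw (\<lambda>L. insert 1 (Suc ` L)) (lawn_sets s t n)
    (two_row_density.ballot_sets (n + 1) (tennis_density s t n))"
proof (rule bij_betw_imageI)
  have lawn: "finite L \<and> 0 \<notin> L" if "L \<in> lawn_sets s t n" for L
    using that finite_subset by (auto simp: lawn_sets_def)
  have unshift: "Suc ` X = insert 1 (Suc ` X) - {1}" if "0 \<notin> X" for X :: "nat set"
    using that by auto
  show "inj_on (\<lambda>L. insert 1 (Suc ` L)) (lawn_sets s t n)"
  proof (rule inj_onI)
    fix L L' assume "L \<in> lawn_sets s t n" "L' \<in> lawn_sets s t n"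
      and "insert 1 (Suc ` L) = insert 1 (Suc ` L')"
    then have "Suc ` L = Suc ` L'"
      using lawn unshift by metis
    then show "L = L'" by (simp add: inj_image_eq_iff)
  qed
  show "(\<lambda>L. insert 1 (Suc ` L)) ` lawn_sets s t n
      = two_row_density.ballot_sets (n + 1) (tennis_density s t n)"
  proof (intro equalityI subsetI)
    fix R assume "R \<in> (\<lambda>L. insert 1 (Suc ` L)) ` lawn_sets s t n"
    then show "R \<in> two_row_density.ballot_sets (n + 1) (tennis_density s t n)"
      using shift_mem_tennis_ballot_sets_iff lawn by blast
  next
    fix R assume R: "R \<in> two_row_density.ballot_sets (n + 1) (tennis_density s t n)"
    then have R_sub: "R \<subseteq> {1..balls_upto s n + 2}"
      and "1 \<le> card {x \<in> R. x \<le> 1}"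
      unfolding tennis_ballot_sets by auto
    then have "{x \<in> R. x \<le> 1} \<noteq> {}" by (metis card.empty not_one_le_zero)
    then have "1 \<in> R" using R_sub by fastforce
    define L where "L = {x. 0 < x \<and> Suc x \<in> R}"
    have "x \<in> Suc ` L" if "x \<in> R" "x \<noteq> 1" for x
    proof -
      have "2 \<le> x" using that R_sub by fastforce
      then have "x = Suc (x - 1)" "x - 1 \<in> L" using that by (auto simp: L_def)
      then show ?thesis by blast
    qed
    then have "R = insert 1 (Suc ` L)"
      using \<open>1 \<in> R\<close> by (auto simp: L_def)
    moreover have "L \<subseteq> {..balls_upto s n + 2}"
      using R_sub by (auto simp: L_def)
    then have "finite L" "0 \<notin> L"
      using finite_subset by (auto simp: L_def)
    ultimately show "R \<in> (\<lambda>L. insert 1 (Suc ` L)) ` lawn_sets s t n"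
      using R shift_mem_tennis_ballot_sets_iff by blast
  qed
qed

end

theorem theorem5:
  fixes n :: nat and s t :: "nat \<Rightarrow> nat"
  assumes "n \<ge> 1"
    and "\<forall>i \<in> {1..n}. 0 < t i \<and> t i < s i"
  shows "tennis_count s t n =
         card (SVT [n + 1, n + 1]
           (\<lambda>(i, j). if i = 1 then (if j = 1 then 1 else t (j - 1))
                     else (if j = n + 1 then 1 else s j - t j)))"
proof -
  interpret two_row_density "n + 1" "tennis_density s t n"
    by (rule two_row_density_tennis[OF assms(2)])
  have "tennis_count s t n = card (lawn_sets s t n)"
    by (rule tennis_count_eq_card_lawn_sets)
  also have "\<dots> = card ballot_sets"
    by (rule bij_betw_same_card[OF bij_betw_shift_lawn_sets[OF assms(2)]])
  also have "\<dots> = card (SVT [n + 1, n + 1] (tennis_density s t n))"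
    by (rule bij_betw_same_card[OF bij_betw_tableau_SVT])
  finally show ?thesis by (simp only: tennis_density_def)
qed

end
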